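(* Let $\eta\in\mathbb{C}$, $N\in\mathbb{N}^*$, $R_{a,b}(\lambda)=\lambda I_{a,b}+\eta\mathbb{P}_{a,b}$ on $\mathbb{C}^3\otimes\mathbb{C}^3$ ($\mathbb{P}$ the permutation), let $K$ be a $w$-simple $3\times3$ matrix, $\mathcal{H}=(\mathbb{C}^3)^{\otimes N}$, and $T_1^{(K)}(\lambda)=\operatorname{tr}_a\big(K_aR_{a,N}(\lambda-\xi_N)\cdots R_{a,1}(\lambda-\xi_1)\big)$. Write $K=W_KK_JW_K^{-1}$ with $K_J=\begin{pmatrix}\mathsf k_0&\mathsf y_1&0\\0&\mathsf k_1&\mathsf y_2\\0&0&\mathsf k_2\end{pmatrix}$ an upper-triangular Jordan form, where (up to permutation of basis vectors) one of the following cases holds: (i) $\mathsf k_0,\mathsf k_1,\mathsf k_2$ pairwise distinct and $\mathsf y_1=\mathsf y_2=0$; (ii) $\mathsf k_0=\mathsf k_1\neq\mathsf k_2$, $\mathsf y_1=1$, $\mathsf y_2=0$; (iii) $\mathsf k_0=\mathsf k_1=\mathsf k_2$, $\mathsf y_1=\mathsf y_2=1$. Then for almost any choice of $\langle S|\in\mathcal{H}^*$ and of the inhomogeneities $\xi_1,\dots,\xi_N$ satisfying $\xi_a\neq\xi_b+r\eta$ for all $a\neq b$ and $r\in\{-2,-1,0,1,2\}$, the set $$\langle h_1,\dots,h_N|:=\langle S|\prod_{n=1}^N\big(T_1^{(K)}(\xi_n)\big)^{h_n},\qquad(h_1,\dots,h_N)\in\{0,1,2\}^N,$$ is a basis of $\mathcal{H}^*$.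 In particular one can take $\langle S|=\big(\bigotimes_{a=1}^N(x,y,z)_a\big)\Gamma_W^{-1}$ with $\Gamma_W=\bigotimes_{a=1}^NW_{K,a}$, requiring $xyz\neq0$ in case (i), $xz\neq0$ in case (ii), and $x\neq0$ in case (iii).
   Context: A matrix is $w$-simple if each of its eigenvalues has exactly one eigenvector up to scalar multiplication. $W_{K,a}$ denotes $W_K$ acting on the $a$-th tensor factor; $(x,y,z)_a$ is a row vector in the $a$-th factor. *)

theory Defs
  imports "Jordan_Normal_Form.Char_Poly" "HOL-Probability.Probability"
begin

text \<open>Index set of the standard basis of (C^3)^{tensor N}: functions from
sites 0..N-1 to {0,1,2}, equal to 0 outside the sites.\<close>
definition idx :: "nat \<Rightarrow> (nat \<Rightarrow> nat) set" where
  "idx N = {f. (\<forall>i<N. f i < 3) \<and> (\<forall>i\<ge>N. f i = 0)}"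

definition w_simple :: "complex mat \<Rightarrow> bool" where
  "w_simple K \<longleftrightarrow> (\<forall>k v w. eigenvector K v k \<and> eigenvector K w k \<longrightarrow> (\<exists>c. w = c \<cdot>\<^sub>v v))"

definition KJ :: "complex \<Rightarrow> complex \<Rightarrow> complex \<Rightarrow> complex \<Rightarrow> complex \<Rightarrow> complex mat" where
  "KJ k0 k1 k2 y1 y2 = Matrix.mat 3 3 (\<lambda>(i,j).
     if i = j then (if i = 0 then k0 else if i = 1 then k1 else k2)
     else if i = 0 \<and> j = 1 then y1
     else if i = 1 \<and> j = 2 then y2 else 0)"

text \<open>Matrix element of R(mu) = mu I + eta P on C^3 (x) C^3:
  <b',o| R(mu) |b,i>, first factor auxiliary, second factor quantum site.\<close>
definition Rel :: "complex \<Rightarrow> complex \<Rightarrow> nat \<Rightarrow> nat \<Rightarrow> nat \<Rightarrow> nat \<Rightarrow> complex" where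
  "Rel \<eta> \<mu> b' ou b i = (if b' = b \<and> ou = i then \<mu> else 0) + (if b' = i \<and> ou = b then \<eta> else 0)"

text \<open>Transfer matrix T_1^{(K)}(lambda) = tr_a (K_a R_{a,N}(lambda-xi_N) ... R_{a,1}(lambda-xi_1)),
  as matrix elements <o| T |i> for o, i in idx N (sites 0-indexed: xi 0, ..., xi (N-1)).
  The auxiliary indices are b 0, ..., b N with trace b (N+1) = b 0.\<close>
definition transfer :: "nat \<Rightarrow> complex mat \<Rightarrow> complex \<Rightarrow> (nat \<Rightarrow> complex) \<Rightarrow> complex
    \<Rightarrow> (nat \<Rightarrow> nat) \<Rightarrow> (nat \<Rightarrow> nat) \<Rightarrow> complex" where
  "transfer N K \<eta> \<xi> lam ou i =
     (\<Sum>b\<in>idx (Suc N). K $$ (b 0, b N) *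
        (\<Prod>n<N. Rel \<eta> (lam - \<xi> n) (b (Suc n)) (ou n) (b n) (i n)))"

definition covec_act :: "nat \<Rightarrow> ((nat \<Rightarrow> nat) \<Rightarrow> (nat \<Rightarrow> nat) \<Rightarrow> complex)
    \<Rightarrow> ((nat \<Rightarrow> nat) \<Rightarrow> complex) \<Rightarrow> ((nat \<Rightarrow> nat) \<Rightarrow> complex)" where
  "covec_act N T S = (\<lambda>j. \<Sum>i\<in>idx N. S i * T i j)"

fun sov_aux :: "nat \<Rightarrow> complex mat \<Rightarrow> complex \<Rightarrow> (nat \<Rightarrow> complex) \<Rightarrow> ((nat \<Rightarrow> nat) \<Rightarrow> complex)
    \<Rightarrow> (nat \<Rightarrow> nat) \<Rightarrow> nat \<Rightarrow> ((nat \<Rightarrow> nat) \<Rightarrow> complex)" where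
  "sov_aux N K \<eta> \<xi> S h 0 = S"
| "sov_aux N K \<eta> \<xi> S h (Suc k) =
     (covec_act N (transfer N K \<eta> \<xi> (\<xi> k)) ^^ h k) (sov_aux N K \<eta> \<xi> S h k)"

definition sov_covec :: "nat \<Rightarrow> complex mat \<Rightarrow> complex \<Rightarrow> (nat \<Rightarrow> complex) \<Rightarrow> ((nat \<Rightarrow> nat) \<Rightarrow> complex)
    \<Rightarrow> (nat \<Rightarrow> nat) \<Rightarrow> ((nat \<Rightarrow> nat) \<Rightarrow> complex)" where
  "sov_covec N K \<eta> \<xi> S h = sov_aux N K \<eta> \<xi> S h N"

text \<open>A family of covectors indexed by idx N is a basis of the dual of (C^3)^{tensor N}
  (covectors are compared on idx N only).\<close>
definition covec_basis :: "nat \<Rightarrow> ((nat \<Rightarrow> nat) \<Rightarrow> (nat \<Rightarrow> nat) \<Rightarrow> complex) \<Rightarrow> bool" where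
  "covec_basis N v \<longleftrightarrow>
     (\<forall>c. (\<forall>j\<in>idx N. (\<Sum>h\<in>idx N. c h * v h j) = 0) \<longrightarrow> (\<forall>h\<in>idx N. c h = 0)) \<and>
     (\<forall>w. \<exists>c. \<forall>j\<in>idx N. w j = (\<Sum>h\<in>idx N. c h * v h j))"

definition admissible :: "nat \<Rightarrow> complex \<Rightarrow> (nat \<Rightarrow> complex) \<Rightarrow> bool" where
  "admissible N \<eta> \<xi> \<longleftrightarrow>
     (\<forall>a<N. \<forall>b<N. a \<noteq> b \<longrightarrow> (\<forall>r::int\<in>{-2..2}. \<xi> a \<noteq> \<xi> b + of_int r * \<eta>))"

text \<open><S| = (tensor_a (x,y,z)_a) Gamma_W^{-1}, Gamma_W^{-1} = tensor_a (W^{-1})_a.\<close>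
definition tensor_state :: "nat \<Rightarrow> complex mat \<Rightarrow> complex \<Rightarrow> complex \<Rightarrow> complex \<Rightarrow> ((nat \<Rightarrow> nat) \<Rightarrow> complex)" where
  "tensor_state N Wi x y z = (\<lambda>j. \<Prod>a<N.
      (\<Sum>\<alpha><3. (if \<alpha> = 0 then x else if \<alpha> = 1 then y else z) * Wi $$ (\<alpha>, j a)))"

end

theory Submission
  imports Defs
begin

(* The covectors <h| form a basis iff the determinant of their coefficient matrix is nonzero, and
   this determinant is a polynomial in the entries of <S| and in the inhomogeneities.  A polynomial
   that is nonzero at one point is nonzero almost everywhere, so one good point suffices.
   Rescaling \<xi> = t \<zeta> replaces \<eta> by \<eta>/t, and at \<lambda> = \<zeta>_k the transfer matrix is
   \<eta>/t times a reduced transfer matrix which, as \<eta>/t \<rightarrow> 0, tends to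
   \<Prod>_{n \<noteq> k} (\<zeta>_k - \<zeta>_n) times K acting on site k.  For <S| = s \<otimes> ... \<otimes> s with
   s, sK, sK^2 a basis of the covectors of C^3 (which the conditions on x, y, z guarantee through
   the Jordan form of K) the limiting covectors \<otimes>_a s K^(h_a) form a basis, so by continuity the
   determinant is nonzero for some small \<eta>/t \<noteq> 0. *)

section \<open>Polynomial functions vanish only on null sets\<close>

inductive polynomial_in :: "('a \<Rightarrow> complex) set \<Rightarrow> ('a \<Rightarrow> complex) \<Rightarrow> bool" for B where
  base: "f \<in> B \<Longrightarrow> polynomial_in B f"
| const: "polynomial_in B (\<lambda>x. c)"
| add: "polynomial_in B f \<Longrightarrow> polynomial_in B g \<Longrightarrow> polynomial_in B (\<lambda>x. f x + g x)"
| mult: "polynomial_in B f \<Longrightarrow> polynomial_in B g \<Longrightarrow> polynomial_in B (\<lambda>x. f x * g x)"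

lemma polynomial_in_sum:
  "finite A \<Longrightarrow> (\<And>a. a \<in> A \<Longrightarrow> polynomial_in B (f a)) \<Longrightarrow> polynomial_in B (\<lambda>x. \<Sum>a\<in>A. f a x)"
  by (induction A rule: finite_induct) (auto intro: polynomial_in.intros)

lemma polynomial_in_prod:
  "finite A \<Longrightarrow> (\<And>a. a \<in> A \<Longrightarrow> polynomial_in B (f a)) \<Longrightarrow> polynomial_in B (\<lambda>x. \<Prod>a\<in>A. f a x)"
  by (induction A rule: finite_induct) (auto intro: polynomial_in.intros)

lemma polynomial_in_if:
  "polynomial_in B f \<Longrightarrow> polynomial_in B g \<Longrightarrow> polynomial_in B (\<lambda>x. if P then f x else g x)"
  by (cases P) auto

lemma polynomial_in_diff:
  assumes "polynomial_in B f" "polynomial_in B g"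
  shows "polynomial_in B (\<lambda>x. f x - g x)"
proof -
  have "polynomial_in B (\<lambda>x. f x + (-1) * g x)"
    by (intro polynomial_in.intros assms)
  then show ?thesis by simp
qed

lemma polynomial_in_continuous_on:
  "polynomial_in B f \<Longrightarrow> (\<And>b. b \<in> B \<Longrightarrow> continuous_on S b) \<Longrightarrow> continuous_on S f"
  by (induction rule: polynomial_in.induct) (auto intro!: continuous_intros)

lemma polynomial_in_measurable:
  "polynomial_in B f \<Longrightarrow> (\<And>b. b \<in> B \<Longrightarrow> b \<in> borel_measurable M) \<Longrightarrow> f \<in> borel_measurable M"
  by (induction rule: polynomial_in.induct) auto

lemma polynomial_in_det:
  assumes "\<And>i j. i < n \<Longrightarrow> j < n \<Longrightarrow> polynomial_in B (\<lambda>x. F x i j)"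
  shows "polynomial_in B (\<lambda>x. Determinant.det (Matrix.mat n n (\<lambda>(i, j). F x i j)))"
proof -
  have "polynomial_in B (\<lambda>x. \<Sum>p\<in>{p. p permutes {0..<n}}. signof p * (\<Prod>i = 0..<n. F x i (p i)))"
    by (intro polynomial_in_sum polynomial_in.mult polynomial_in.const polynomial_in_prod)
      (auto simp: finite_permutations permutes_in_image assms)
  then show ?thesis
    unfolding Determinant.det_def by simp
qed

lemma isCont_other_point_ne:
  fixes f :: "'a::{perfect_space, t2_space} \<Rightarrow> 'b::t2_space"
  assumes "isCont f a" "f a \<noteq> c"
  obtains x where "x \<noteq> a" "f x \<noteq> c"
proof -
  have "\<forall>\<^sub>F x in at a. f x \<noteq> c"
    using assms by (simp add: isCont_def tendsto_imp_eventually_ne)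
  moreover have "\<forall>\<^sub>F x in at a. x \<noteq> a"
    by (simp add: eventually_at_filter)
  ultimately have "\<forall>\<^sub>F x in at a. x \<noteq> a \<and> f x \<noteq> c"
    by eventually_elim simp
  then show ?thesis
    using that eventually_happens[of _ "at a"] by auto
qed

definition coordinates :: "'i set \<Rightarrow> (('i \<Rightarrow> complex) \<Rightarrow> complex) set" where
  "coordinates I = {(\<lambda>x. x i) | i. i \<in> I}"

lemma polynomial_in_coordinate: "i \<in> I \<Longrightarrow> polynomial_in (coordinates I) (\<lambda>x. x i)"
  by (rule polynomial_in.base) (auto simp: coordinates_def)

lemma polynomial_in_coordinates_cong:
  "polynomial_in (coordinates I) f \<Longrightarrow> (\<And>i. i \<in> I \<Longrightarrow> x i = y i) \<Longrightarrow> f x = f y"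
  by (induction rule: polynomial_in.induct) (auto simp: coordinates_def)

lemma polynomial_in_coordinates_measurable:
  assumes "polynomial_in (coordinates I) f"
  shows "f \<in> borel_measurable (PiM I (\<lambda>_. lborel))"
  using assms by (rule polynomial_in_measurable) (auto simp: coordinates_def)

lemma polynomial_in_insert_coordinate:
  assumes "polynomial_in (coordinates (insert i I)) f"
  obtains p where "\<And>k. polynomial_in (coordinates I) (\<lambda>x. coeff (p x) k)"
    and "\<And>x. f x = poly (p x) (x i)"
proof -
  have "\<exists>p. (\<forall>k. polynomial_in (coordinates I) (\<lambda>x. coeff (p x) k)) \<and> (\<forall>x. f x = poly (p x) (x i))"
    using assms
  proof (induction rule: polynomial_in.induct)
    case (base f)
    then obtain j where j: "j \<in> insert i I" "f = (\<lambda>x. x j)"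
      by (auto simp: coordinates_def)
    show ?case
    proof (cases "j = i")
      case True
      then show ?thesis
        using j by (intro exI[of _ "\<lambda>x. [:0, 1:]"]) (auto intro: polynomial_in.const)
    next
      case False
      have "polynomial_in (coordinates I) (\<lambda>x. coeff [:x j:] k)" for k
        using j False by (cases k) (auto intro: polynomial_in_coordinate polynomial_in.const)
      then show ?thesis
        using j by (intro exI[of _ "\<lambda>x. [:x j:]"]) auto
    qed
  next
    case (const c)
    show ?case
      by (intro exI[of _ "\<lambda>x. [:c:]"]) (auto intro: polynomial_in.const)
  next
    case (add f g)
    then obtain p q where
      "\<forall>k. polynomial_in (coordinates I) (\<lambda>x. coeff (p x) k)" "\<forall>x. f x = poly (p x) (x i)"
      "\<forall>k. polynomial_in (coordinates I) (\<lambda>x. coeff (q x) k)" "\<forall>x. g x = poly (q x) (x i)"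
      by blast
    then show ?case
      by (intro exI[of _ "\<lambda>x. p x + q x"]) (auto intro: polynomial_in.add)
  next
    case (mult f g)
    then obtain p q where
      "\<forall>k. polynomial_in (coordinates I) (\<lambda>x. coeff (p x) k)" "\<forall>x. f x = poly (p x) (x i)"
      "\<forall>k. polynomial_in (coordinates I) (\<lambda>x. coeff (q x) k)" "\<forall>x. g x = poly (q x) (x i)"
      by blast
    then show ?case
      by (intro exI[of _ "\<lambda>x. p x * q x"])
        (auto simp: coeff_mult intro!: polynomial_in_sum polynomial_in.mult)
  qed
  then show ?thesis
    using that by blast
qed

lemma AE_lborel_poly_nonzero:
  fixes q :: "complex poly"
  assumes "q \<noteq> 0"
  shows "AE t in lborel. poly q t \<noteq> 0"
  by (rule AE_I'[OF finite_imp_null_set_lborel[OF poly_roots_finite[OF assms]]]) auto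

lemma (in product_sigma_finite) AE_PiM_insertI:
  assumes "finite I" "i \<notin> I"
    and [measurable]: "Measurable.pred (PiM (insert i I) M) P"
    and "AE x in PiM I M. AE t in M i. P (x(i := t))"
  shows "AE x in PiM (insert i I) M. P x"
proof -
  interpret I: finite_product_sigma_finite M I
    by standard (use assms(1) in simp)
  interpret i: finite_product_sigma_finite M "{i}"
    by standard simp
  interpret pair_sigma_finite "PiM I M" "PiM {i} M"
    by standard
  have [measurable]: "merge I {i} \<in> PiM I M \<Otimes>\<^sub>M PiM {i} M \<rightarrow>\<^sub>M PiM (insert i I) M"
    using measurable_merge[of I "{i}" M] by simp
  have "AE y in PiM I M \<Otimes>\<^sub>M PiM {i} M. P (merge I {i} y)"
  proof (rule AE_pair_measure)
    show "{y \<in> space (PiM I M \<Otimes>\<^sub>M PiM {i} M). P (merge I {i} y)} \<in> sets (PiM I M \<Otimes>\<^sub>M PiM {i} M)"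
      by measurable
    show "AE x in PiM I M. AE y in PiM {i} M. P (merge I {i} (x, y))"
      using assms(4) AE_space
    proof eventually_elim
      case (elim x)
      then have "AE t in distr (PiM {i} M) (M i) (\<lambda>y. y i). P (x(i := t))"
        using distr_singleton[of i] by metis
      then have "AE y in PiM {i} M. P (x(i := y i))"
        by (rule AE_distrD[rotated]) simp
      moreover have "merge I {i} (x, y) = x(i := y i)" for y
        using elim(2) assms(2) by (auto simp: space_PiM PiE_def extensional_def)
      ultimately show ?case
        by simp
    qed
  qed
  then have "AE z in distr (PiM I M \<Otimes>\<^sub>M PiM {i} M) (PiM (insert i I) M) (merge I {i}). P z"
    by (subst AE_distr_iff) auto
  moreover have "distr (PiM I M \<Otimes>\<^sub>M PiM {i} M) (PiM (insert i I) M) (merge I {i}) = PiM (insert i I) M"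
    using distr_merge[of I "{i}"] assms(1,2) by simp
  ultimately show ?thesis
    by metis
qed


lemma AE_PiM_polynomial_nonzero:
  assumes "finite I" "polynomial_in (coordinates I) f" "f x0 \<noteq> 0"
  shows "AE x in PiM I (\<lambda>_. lborel). f x \<noteq> 0"
  using assms
proof (induction I arbitrary: f x0 rule: finite_induct)
  case empty
  have "f x = f x0" for x
    by (rule polynomial_in_coordinates_cong[OF empty.prems(1)]) simp
  with empty show ?case
    by (intro AE_I2) metis
next
  case (insert i I)
  interpret product_sigma_finite "\<lambda>_. lborel :: complex measure"
    by (simp add: product_sigma_finite_def lborel.sigma_finite_measure_axioms)
  obtain p where p: "\<And>k. polynomial_in (coordinates I) (\<lambda>x. coeff (p x) k)"
    and f: "\<And>x. f x = poly (p x) (x i)"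
    using polynomial_in_insert_coordinate[OF insert.prems(1)] by blast
  have "p x0 \<noteq> 0"
    using insert.prems(2) f by auto
  then obtain k where "coeff (p x0) k \<noteq> 0"
    by (meson leading_coeff_neq_0)
  then have coeff_AE: "AE x in PiM I (\<lambda>_. lborel). coeff (p x) k \<noteq> 0"
    by (rule insert.IH[OF p])
  have [measurable]: "f \<in> borel_measurable (PiM (insert i I) (\<lambda>_. lborel))"
    by (rule polynomial_in_coordinates_measurable[OF insert.prems(1)])
  show ?case
  proof (rule AE_PiM_insertI[OF insert.hyps(1,2)])
    show "Measurable.pred (PiM (insert i I) (\<lambda>_. lborel)) (\<lambda>x. f x \<noteq> 0)"
      by measurable
    show "AE x in PiM I (\<lambda>_. lborel). AE t in lborel. f (x(i := t)) \<noteq> 0"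
      using coeff_AE
    proof eventually_elim
      case (elim x)
      have "p (x(i := t)) = p x" for t
        by (rule poly_eqI, rule polynomial_in_coordinates_cong[OF p]) (use insert.hyps(2) in auto)
      moreover have "p x \<noteq> 0"
        using elim by auto
      ultimately show ?case
        unfolding f by (simp add: AE_lborel_poly_nonzero)
    qed
  qed
qed

section \<open>Bases of covectors\<close>

lemma finite_idx: "finite (idx N)"
  unfolding idx_def
  by (rule finite_subset[OF _ finite_set_of_finite_funs[of "{..<N}" "{..<3::nat}" 0]]) auto

lemma idx_less_3: "j \<in> idx N \<Longrightarrow> a < N \<Longrightarrow> j a < 3"
  and idx_eq_0: "j \<in> idx N \<Longrightarrow> N \<le> a \<Longrightarrow> j a = 0"
  unfolding idx_def by auto

definition idx_enum :: "nat \<Rightarrow> nat \<Rightarrow> nat \<Rightarrow> nat" where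
  "idx_enum N = (SOME e. bij_betw e {0..<card (idx N)} (idx N))"

lemma bij_betw_idx_enum: "bij_betw (idx_enum N) {0..<card (idx N)} (idx N)"
  unfolding idx_enum_def by (rule someI_ex[OF ex_bij_betw_nat_finite[OF finite_idx]])

lemma idx_enum_in: "r < card (idx N) \<Longrightarrow> idx_enum N r \<in> idx N"
  using bij_betw_idx_enum[of N] by (auto simp: bij_betw_def)

lemma idx_enum_eq_iff:
  "r < card (idx N) \<Longrightarrow> r' < card (idx N) \<Longrightarrow> idx_enum N r = idx_enum N r' \<longleftrightarrow> r = r'"
  using bij_betw_idx_enum[of N] by (auto simp: bij_betw_def inj_on_def)

lemma idx_enum_cases:
  assumes "h \<in> idx N"
  obtains r where "r < card (idx N)" "h = idx_enum N r"
  using bij_betw_idx_enum[of N] assms by (force simp: bij_betw_def)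

lemma sum_idx_enum: "(\<Sum>h\<in>idx N. g h) = (\<Sum>r<card (idx N). g (idx_enum N r))"
  using sum.reindex_bij_betw[OF bij_betw_idx_enum[of N], of g] by (simp add: atLeast0LessThan)

definition covec_row :: "nat \<Rightarrow> ((nat \<Rightarrow> nat) \<Rightarrow> complex) \<Rightarrow> complex mat" where
  "covec_row N w = Matrix.mat 1 (card (idx N)) (\<lambda>(_, r). w (idx_enum N r))"

definition covec_matrix :: "nat \<Rightarrow> ((nat \<Rightarrow> nat) \<Rightarrow> (nat \<Rightarrow> nat) \<Rightarrow> complex) \<Rightarrow> complex mat" where
  "covec_matrix N v = Matrix.mat (card (idx N)) (card (idx N)) (\<lambda>(r, q). v (idx_enum N r) (idx_enum N q))"

lemma covec_row_mult_covec_matrix: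
  assumes "q < card (idx N)"
  shows "(covec_row N c * covec_matrix N v) $$ (0, q) = (\<Sum>h\<in>idx N. c h * v h (idx_enum N q))"
  using assms by (simp add: covec_row_def covec_matrix_def scalar_prod_def atLeast0LessThan sum_idx_enum)

definition covec_spans :: "nat \<Rightarrow> ((nat \<Rightarrow> nat) \<Rightarrow> (nat \<Rightarrow> nat) \<Rightarrow> complex) \<Rightarrow> bool" where
  "covec_spans N v \<longleftrightarrow> (\<forall>w. \<exists>c. \<forall>j\<in>idx N. w j = (\<Sum>h\<in>idx N. c h * v h j))"

lemma covec_spans_imp_det_nonzero:
  assumes "covec_spans N v"
  shows "Determinant.det (covec_matrix N v) \<noteq> 0"
proof -
  let ?n = "card (idx N)"
  from assms obtain C where C: "\<And>w j. j \<in> idx N \<Longrightarrow> w j = (\<Sum>h\<in>idx N. C w h * v h j)"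
    unfolding covec_spans_def by metis
  define \<delta> where "\<delta> r = (\<lambda>j. if j = idx_enum N r then 1 else 0 :: complex)" for r
  define Cm where "Cm = Matrix.mat ?n ?n (\<lambda>(r, q). C (\<delta> r) (idx_enum N q))"
  have A: "covec_matrix N v \<in> carrier_mat ?n ?n" and Cm: "Cm \<in> carrier_mat ?n ?n"
    by (simp_all add: covec_matrix_def Cm_def)
  have "Cm * covec_matrix N v = 1\<^sub>m ?n"
  proof (rule eq_matI)
    fix r r' assume rr: "r < dim_row (1\<^sub>m ?n)" "r' < dim_col (1\<^sub>m ?n)"
    have "(Cm * covec_matrix N v) $$ (r, r') = (\<Sum>h\<in>idx N. C (\<delta> r) h * v h (idx_enum N r'))"
      using rr by (simp add: Cm_def covec_matrix_def scalar_prod_def atLeast0LessThan sum_idx_enum)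
    also have "\<dots> = \<delta> r (idx_enum N r')"
      using C idx_enum_in rr by simp
    also have "\<dots> = 1\<^sub>m ?n $$ (r, r')"
      using rr idx_enum_eq_iff by (auto simp: \<delta>_def)
    finally show "(Cm * covec_matrix N v) $$ (r, r') = 1\<^sub>m ?n $$ (r, r')" .
  qed (use A Cm in auto)
  then have "Determinant.det Cm * Determinant.det (covec_matrix N v) = 1"
    using det_mult[OF Cm A] by simp
  then show ?thesis
    by auto
qed

lemma det_nonzero_imp_covec_basis:
  assumes "Determinant.det (covec_matrix N v) \<noteq> 0"
  shows "covec_basis N v"
proof -
  let ?n = "card (idx N)" and ?A = "covec_matrix N v"
  have A: "?A \<in> carrier_mat ?n ?n"
    by (simp add: covec_matrix_def)
  obtain B where B: "B \<in> carrier_mat ?n ?n" "B * ?A = 1\<^sub>m ?n" "?A * B = 1\<^sub>m ?n"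
    using det_non_zero_imp_unit[OF A assms] unfolding Units_def ring_mat_def by auto
  have row: "covec_row N w \<in> carrier_mat 1 ?n" for w
    by (simp add: covec_row_def)
  have independent: "\<forall>h\<in>idx N. c h = 0" if c: "\<forall>j\<in>idx N. (\<Sum>h\<in>idx N. c h * v h j) = 0" for c
  proof -
    have "covec_row N c * ?A = 0\<^sub>m 1 ?n"
      using c idx_enum_in
      by (intro eq_matI) (auto simp: covec_row_mult_covec_matrix, simp_all add: covec_row_def covec_matrix_def)
    then have zero: "covec_row N c = 0\<^sub>m 1 ?n"
      using B A row[of c] by (metis assoc_mult_mat left_mult_zero_mat right_mult_one_mat)
    show ?thesis
    proof
      fix h assume "h \<in> idx N"
      then obtain r where r: "r < ?n" "h = idx_enum N r"
        by (rule idx_enum_cases)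
      then have "covec_row N c $$ (0, r) = 0"
        using zero by simp
      then show "c h = 0"
        using r by (simp add: covec_row_def)
    qed
  qed
  have spanning: "\<exists>c. \<forall>j\<in>idx N. w j = (\<Sum>h\<in>idx N. c h * v h j)" for w
  proof -
    define c where "c h = (covec_row N w * B) $$ (0, inv_into {0..<?n} (idx_enum N) h)" for h
    have "covec_row N c = covec_row N w * B"
    proof (rule eq_matI)
      fix i r assume "i < dim_row (covec_row N w * B)" "r < dim_col (covec_row N w * B)"
      then have "i = 0" "r < ?n"
        using B by (simp_all add: covec_row_def)
      then show "covec_row N c $$ (i, r) = (covec_row N w * B) $$ (i, r)"
        using bij_betw_idx_enum[of N] by (simp add: c_def covec_row_def bij_betw_def)
    qed (use B in \<open>simp_all add: covec_row_def\<close>)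
    then have c: "covec_row N c * ?A = covec_row N w"
      using A B row by (metis assoc_mult_mat right_mult_one_mat)
    have "w j = (\<Sum>h\<in>idx N. c h * v h j)" if j: "j \<in> idx N" for j
    proof -
      obtain q where q: "q < ?n" "j = idx_enum N q"
        using j by (rule idx_enum_cases)
      then have "w j = covec_row N w $$ (0, q)"
        by (simp add: covec_row_def)
      also have "\<dots> = (\<Sum>h\<in>idx N. c h * v h j)"
        using q by (simp flip: c add: covec_row_mult_covec_matrix)
      finally show ?thesis .
    qed
    then show ?thesis
      by blast
  qed
  show ?thesis
    unfolding covec_basis_def using independent spanning by blast
qed

lemma covec_spans_iff_det_nonzero:
  "covec_spans N v \<longleftrightarrow> Determinant.det (covec_matrix N v) \<noteq> 0"
  using covec_spans_imp_det_nonzero det_nonzero_imp_covec_basis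
  unfolding covec_basis_def covec_spans_def by blast

lemma covec_spans_cong:
  "covec_spans N v \<Longrightarrow> (\<And>h j. h \<in> idx N \<Longrightarrow> j \<in> idx N \<Longrightarrow> v h j = v' h j) \<Longrightarrow> covec_spans N v'"
  unfolding covec_spans_def by (metis (no_types, lifting) sum.cong)

lemma covec_spans_scale:
  assumes "covec_spans N v" "\<And>h. h \<in> idx N \<Longrightarrow> a h \<noteq> 0"
  shows "covec_spans N (\<lambda>h j. a h * v h j)"
  unfolding covec_spans_def
proof
  fix w
  obtain c where "\<forall>j\<in>idx N. w j = (\<Sum>h\<in>idx N. c h * v h j)"
    using assms(1) unfolding covec_spans_def by blast
  then show "\<exists>c. \<forall>j\<in>idx N. w j = (\<Sum>h\<in>idx N. c h * (a h * v h j))"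
    using assms(2) by (intro exI[of _ "\<lambda>h. c h / a h"]) simp
qed

lemma polynomial_in_det_covec_matrix:
  assumes "\<And>h j. h \<in> idx N \<Longrightarrow> j \<in> idx N \<Longrightarrow> polynomial_in B (\<lambda>y. v y h j)"
  shows "polynomial_in B (\<lambda>y. Determinant.det (covec_matrix N (v y)))"
  unfolding covec_matrix_def by (rule polynomial_in_det) (simp add: assms idx_enum_in)

fun covec_act_powers :: "nat \<Rightarrow> (nat \<Rightarrow> (nat \<Rightarrow> nat) \<Rightarrow> (nat \<Rightarrow> nat) \<Rightarrow> complex)
    \<Rightarrow> ((nat \<Rightarrow> nat) \<Rightarrow> complex) \<Rightarrow> (nat \<Rightarrow> nat) \<Rightarrow> nat \<Rightarrow> ((nat \<Rightarrow> nat) \<Rightarrow> complex)" where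
  "covec_act_powers N T S h 0 = S"
| "covec_act_powers N T S h (Suc k) = (covec_act N (T k) ^^ h k) (covec_act_powers N T S h k)"

lemma sov_covec_eq_covec_act_powers:
  "sov_covec N K \<eta> \<xi> S h = covec_act_powers N (\<lambda>k. transfer N K \<eta> \<xi> (\<xi> k)) S h N"
proof -
  have "sov_aux N K \<eta> \<xi> S h k = covec_act_powers N (\<lambda>k. transfer N K \<eta> \<xi> (\<xi> k)) S h k" for k
    by (induction k) auto
  then show ?thesis
    by (simp add: sov_covec_def)
qed

lemma covec_act_cong:
  "(\<And>i. i \<in> idx N \<Longrightarrow> S i = S' i \<and> T i j = T' i j) \<Longrightarrow> covec_act N T S j = covec_act N T' S' j"
  unfolding covec_act_def by (rule sum.cong) auto

lemma covec_act_funpow_cong: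
  assumes "\<And>i j. i \<in> idx N \<Longrightarrow> j \<in> idx N \<Longrightarrow> T i j = T' i j" "\<And>i. i \<in> idx N \<Longrightarrow> S i = S' i"
    and "j \<in> idx N"
  shows "(covec_act N T ^^ m) S j = (covec_act N T' ^^ m) S' j"
  using assms(3)
proof (induction m arbitrary: j)
  case (Suc m)
  have "covec_act N T ((covec_act N T ^^ m) S) j = covec_act N T' ((covec_act N T' ^^ m) S') j"
    by (rule covec_act_cong) (use Suc assms(1) in auto)
  then show ?case
    by simp
qed (use assms(2) in simp)

lemma covec_act_powers_cong:
  assumes "\<And>k i j. k < M \<Longrightarrow> i \<in> idx N \<Longrightarrow> j \<in> idx N \<Longrightarrow> T k i j = T' k i j"
    and "\<And>i. i \<in> idx N \<Longrightarrow> S i = S' i" and "j \<in> idx N"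
  shows "covec_act_powers N T S h M j = covec_act_powers N T' S' h M j"
  using assms(1,3)
proof (induction M arbitrary: j)
  case (Suc M)
  have "(covec_act N (T M) ^^ h M) (covec_act_powers N T S h M) j
      = (covec_act N (T' M) ^^ h M) (covec_act_powers N T' S' h M) j"
    by (rule covec_act_funpow_cong) (use Suc in auto)
  then show ?case
    by simp
qed (use assms(2) in simp)

lemma covec_act_scale:
  "covec_act N (\<lambda>i j. c * T i j) (\<lambda>i. a * S i) = (\<lambda>j. c * a * covec_act N T S j)"
  unfolding covec_act_def by (rule ext) (simp add: sum_distrib_left mult.assoc mult.left_commute)

lemma covec_act_funpow_scale:
  "(covec_act N (\<lambda>i j. c * T i j) ^^ m) (\<lambda>i. a * S i) = (\<lambda>j. c ^ m * a * (covec_act N T ^^ m) S j)"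
proof (induction m)
  case (Suc m)
  then show ?case
    using covec_act_scale[of N c T "c ^ m * a" "(covec_act N T ^^ m) S"] by (simp add: ac_simps)
qed simp

lemma covec_act_powers_scale:
  "covec_act_powers N (\<lambda>k i j. c k * T k i j) S h M
     = (\<lambda>j. (\<Prod>m<M. c m ^ h m) * covec_act_powers N T S h M j)"
proof (induction M)
  case (Suc M)
  then show ?case
    using covec_act_funpow_scale[where c="c M" and T="T M" and m="h M"
        and a="\<Prod>m<M. c m ^ h m" and S="covec_act_powers N T S h M"]
    by (simp add: ac_simps)
qed simp

lemma polynomial_in_covec_act:
  assumes "\<And>i. i \<in> idx N \<Longrightarrow> polynomial_in B (\<lambda>y. S y i)"
    and "\<And>i. i \<in> idx N \<Longrightarrow> polynomial_in B (\<lambda>y. T y i j)"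
  shows "polynomial_in B (\<lambda>y. covec_act N (T y) (S y) j)"
  unfolding covec_act_def using assms by (auto intro!: polynomial_in_sum polynomial_in.mult finite_idx)

lemma polynomial_in_covec_act_funpow:
  assumes "\<And>i j. i \<in> idx N \<Longrightarrow> j \<in> idx N \<Longrightarrow> polynomial_in B (\<lambda>y. T y i j)"
    and "\<And>i. i \<in> idx N \<Longrightarrow> polynomial_in B (\<lambda>y. S y i)" and "j \<in> idx N"
  shows "polynomial_in B (\<lambda>y. (covec_act N (T y) ^^ m) (S y) j)"
  using assms(3)
proof (induction m arbitrary: j)
  case (Suc m)
  then show ?case
    using assms(1) by (simp add: polynomial_in_covec_act)
qed (use assms(2) in simp)

lemma polynomial_in_covec_act_powers:
  assumes "\<And>k i j. k < M \<Longrightarrow> i \<in> idx N \<Longrightarrow> j \<in> idx N \<Longrightarrow> polynomial_in B (\<lambda>y. T y k i j)"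
    and "\<And>i. i \<in> idx N \<Longrightarrow> polynomial_in B (\<lambda>y. S y i)" and "j \<in> idx N"
  shows "polynomial_in B (\<lambda>y. covec_act_powers N (T y) (S y) h M j)"
  using assms(1,3)
proof (induction M arbitrary: j)
  case (Suc M)
  then show ?case
    using polynomial_in_covec_act_funpow[where T="\<lambda>y. T y M"] by simp
qed (use assms(2) in simp)

section \<open>The transfer matrix at the inhomogeneities\<close>

lemma Rel_scale:
  assumes "t \<noteq> 0"
  shows "Rel \<eta> (t * \<mu>) b' ou b i = t * Rel (\<eta> / t) \<mu> b' ou b i"
proof -
  have "(if A then t * \<mu> else 0) + (if B then \<eta> else 0) = t * ((if A then \<mu> else 0) + (if B then \<eta> / t else 0))"
    for A B
    using assms by (cases A; cases B) (simp_all add: distrib_left)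
  then show ?thesis
    unfolding Rel_def .
qed

lemma Rel_spectral_zero: "Rel \<eta> 0 b' ou b i = \<eta> * (if b' = i \<and> ou = b then 1 else 0)"
  unfolding Rel_def by simp

lemma Rel_eta_zero: "Rel 0 \<mu> b' ou b i = (if b' = b \<and> ou = i then \<mu> else 0)"
  unfolding Rel_def by simp

lemma transfer_scale:
  assumes "t \<noteq> 0"
  shows "transfer N K \<eta> (\<lambda>n. t * \<zeta> n) (t * lam) ou i = t ^ N * transfer N K (\<eta> / t) \<zeta> lam ou i"
proof -
  have "Rel \<eta> (t * lam - t * \<zeta> n) b' ou' b i' = t * Rel (\<eta> / t) (lam - \<zeta> n) b' ou' b i'" for n b' ou' b i'
    using Rel_scale[OF assms, of \<eta> "lam - \<zeta> n"] by (simp only: right_diff_distrib)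
  then show ?thesis
    unfolding transfer_def by (simp add: prod.distrib sum_distrib_left mult.left_commute)
qed

(* The factor R(0) = \<eta> P of site k is replaced by the permutation P. *)
definition transfer_reduced :: "nat \<Rightarrow> complex mat \<Rightarrow> complex \<Rightarrow> (nat \<Rightarrow> complex) \<Rightarrow> nat
    \<Rightarrow> (nat \<Rightarrow> nat) \<Rightarrow> (nat \<Rightarrow> nat) \<Rightarrow> complex" where
  "transfer_reduced N K \<eta> \<zeta> k ou i = (\<Sum>b\<in>idx (Suc N). K $$ (b 0, b N) *
     (\<Prod>n<N. if n = k then (if b (Suc n) = i n \<and> ou n = b n then 1 else 0)
             else Rel \<eta> (\<zeta> k - \<zeta> n) (b (Suc n)) (ou n) (b n) (i n)))"

lemma transfer_at_inhomogeneity: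
  assumes "k < N"
  shows "transfer N K \<eta> \<zeta> (\<zeta> k) ou i = \<eta> * transfer_reduced N K \<eta> \<zeta> k ou i"
proof -
  have "(\<Prod>n<N. Rel \<eta> (\<zeta> k - \<zeta> n) (b (Suc n)) (ou n) (b n) (i n))
      = \<eta> * (\<Prod>n<N. if n = k then (if b (Suc n) = i n \<and> ou n = b n then 1 else 0)
             else Rel \<eta> (\<zeta> k - \<zeta> n) (b (Suc n)) (ou n) (b n) (i n))" for b
  proof -
    have "(\<Prod>n<N. Rel \<eta> (\<zeta> k - \<zeta> n) (b (Suc n)) (ou n) (b n) (i n))
        = (\<Prod>n<N. (if n = k then \<eta> else 1) * (if n = k then (if b (Suc n) = i n \<and> ou n = b n then 1 else 0)
             else Rel \<eta> (\<zeta> k - \<zeta> n) (b (Suc n)) (ou n) (b n) (i n)))"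
      by (rule prod.cong) (simp_all add: Rel_spectral_zero)
    also have "\<dots> = (\<Prod>n<N. if n = k then \<eta> else 1) * (\<Prod>n<N. if n = k then (if b (Suc n) = i n \<and> ou n = b n then 1 else 0)
             else Rel \<eta> (\<zeta> k - \<zeta> n) (b (Suc n)) (ou n) (b n) (i n))"
      by (rule prod.distrib)
    finally show ?thesis
      using assms by (simp add: prod.delta)
  qed
  then show ?thesis
    unfolding transfer_def transfer_reduced_def by (simp add: sum_distrib_left mult.left_commute)
qed

definition site_op :: "nat \<Rightarrow> complex mat \<Rightarrow> nat \<Rightarrow> (nat \<Rightarrow> nat) \<Rightarrow> (nat \<Rightarrow> nat) \<Rightarrow> complex" where
  "site_op N K k ou i = K $$ (ou k, i k) * (\<Prod>n\<in>{..<N} - {k}. if ou n = i n then 1 else 0)"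

lemma idx_path_jump:
  assumes b: "b \<in> idx (Suc N)" and k: "k < N"
    and jump: "\<And>n. n < N \<Longrightarrow> n \<noteq> k \<Longrightarrow> b (Suc n) = b n"
  shows "b = (\<lambda>n. if n \<le> k then b 0 else if n \<le> N then b (Suc k) else 0)"
proof
  fix m
  have low: "m \<le> k \<Longrightarrow> b m = b 0"
    by (induction m) (use jump k in auto)
  have high: "Suc k \<le> m \<Longrightarrow> m \<le> N \<Longrightarrow> b m = b (Suc k)"
    by (induction m) (use jump in \<open>auto simp: le_Suc_eq\<close>)
  show "b m = (if m \<le> k then b 0 else if m \<le> N then b (Suc k) else 0)"
    using low high idx_eq_0[OF b, of m] by auto
qed

(* At \<eta> = 0 every R is diagonal in the auxiliary space, except P at site k, so a single
   auxiliary path contributes. *)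
lemma transfer_reduced_eta_zero:
  assumes k: "k < N" and ou: "ou \<in> idx N" and i: "i \<in> idx N"
  shows "transfer_reduced N K 0 \<zeta> k ou i = (\<Prod>n\<in>{..<N} - {k}. \<zeta> k - \<zeta> n) * site_op N K k ou i"
proof -
  define G where "G b n = (if n = k then (if b (Suc n) = i n \<and> ou n = b n then 1 else 0)
             else Rel 0 (\<zeta> k - \<zeta> n) (b (Suc n)) (ou n) (b n) (i n))" for b n
  define path where "path n = (if n \<le> k then ou k else if n \<le> N then i k else 0)" for n
  have path: "path \<in> idx (Suc N)"
    using idx_less_3[OF ou k] idx_less_3[OF i k] k unfolding idx_def path_def by auto
  have off_path: "(\<Prod>n<N. G b n) = 0" if b: "b \<in> idx (Suc N)" "b \<noteq> path" for b
  proof (rule ccontr)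
    assume "(\<Prod>n<N. G b n) \<noteq> 0"
    then have nonzero: "G b n \<noteq> 0" if "n < N" for n
      using that by auto
    have ends: "b (Suc k) = i k" "b k = ou k"
      using nonzero[OF k] by (auto simp: G_def split: if_splits)
    have "b (Suc n) = b n" if "n < N" "n \<noteq> k" for n
      using nonzero[OF that(1)] that(2) by (auto simp: G_def Rel_eta_zero split: if_splits)
    then have shape: "b = (\<lambda>n. if n \<le> k then b 0 else if n \<le> N then b (Suc k) else 0)"
      by (rule idx_path_jump[OF b(1) k])
    have "b n = path n" for n
      using fun_cong[OF shape, of n] fun_cong[OF shape, of k] ends by (simp add: path_def)
    with b(2) show False
      by blast
  qed
  have "transfer_reduced N K 0 \<zeta> k ou i = K $$ (path 0, path N) * (\<Prod>n<N. G path n)"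
    unfolding transfer_reduced_def G_def[symmetric]
    by (subst sum.remove[OF finite_idx path]) (simp add: off_path)
  also have "(\<Prod>n<N. G path n) = G path k * (\<Prod>n\<in>{..<N} - {k}. G path n)"
    by (rule prod.remove) (use k in auto)
  also have "(\<Prod>n\<in>{..<N} - {k}. G path n) = (\<Prod>n\<in>{..<N} - {k}. (\<zeta> k - \<zeta> n) * (if ou n = i n then 1 else 0))"
    by (rule prod.cong) (auto simp: G_def path_def Rel_eta_zero)
  finally show ?thesis
    using k by (simp add: G_def path_def site_op_def prod.distrib)
qed

lemma polynomial_in_Rel:
  assumes "polynomial_in B e" "polynomial_in B m"
  shows "polynomial_in B (\<lambda>y. Rel (e y) (m y) b' ou b i)"
  unfolding Rel_def by (intro polynomial_in.add polynomial_in_if polynomial_in.const assms)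

lemma polynomial_in_transfer:
  assumes "\<And>n. n < N \<Longrightarrow> polynomial_in B (\<lambda>y. \<xi> y n)" "polynomial_in B lam"
  shows "polynomial_in B (\<lambda>y. transfer N K \<eta> (\<xi> y) (lam y) ou i)"
  unfolding transfer_def
  by (intro polynomial_in_sum polynomial_in_prod polynomial_in.mult polynomial_in.const
      polynomial_in_Rel polynomial_in_diff assms finite_idx) auto

lemma polynomial_in_transfer_reduced:
  assumes "polynomial_in B e"
  shows "polynomial_in B (\<lambda>y. transfer_reduced N K (e y) \<zeta> k ou i)"
  unfolding transfer_reduced_def
  by (intro polynomial_in_sum polynomial_in_prod polynomial_in.mult polynomial_in.const polynomial_in_if
      polynomial_in_Rel assms finite_idx) auto

section \<open>Product covectors\<close>

definition product_covec :: "nat \<Rightarrow> (nat \<Rightarrow> nat \<Rightarrow> complex) \<Rightarrow> (nat \<Rightarrow> nat) \<Rightarrow> complex" where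
  "product_covec N g j = (\<Prod>a<N. g a (j a))"

definition row_mult :: "complex mat \<Rightarrow> (nat \<Rightarrow> complex) \<Rightarrow> nat \<Rightarrow> complex" where
  "row_mult K s \<beta> = (\<Sum>\<alpha><3. s \<alpha> * K $$ (\<alpha>, \<beta>))"

lemma tensor_state_eq_product_covec:
  "tensor_state N Wi x y z
     = product_covec N (\<lambda>_. row_mult Wi (\<lambda>\<alpha>. if \<alpha> = 0 then x else if \<alpha> = 1 then y else z))"
  unfolding tensor_state_def product_covec_def row_mult_def by simp

lemma prod_sum_eq_sum_idx:
  "(\<Prod>a<N. \<Sum>\<alpha><3. f a \<alpha>) = (\<Sum>h\<in>idx N. \<Prod>a<N. f a (h a) :: complex)"
proof -
  have "(\<Prod>a<N. \<Sum>\<alpha><3. f a \<alpha>) = (\<Sum>g\<in>PiE {..<N} (\<lambda>_. {..<3}). \<Prod>a<N. f a (g a))"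
    by (rule prod_sum_PiE) auto
  also have "\<dots> = (\<Sum>h\<in>idx N. \<Prod>a<N. f a (h a))"
    by (rule sum.reindex_bij_witness[where i="\<lambda>h. restrict h {..<N}" and j="\<lambda>g a. if a < N then g a else 0"])
      (auto simp: idx_def PiE_def extensional_def)
  finally show ?thesis .
qed

lemma covec_act_site_op:
  assumes k: "k < N" and j: "j \<in> idx N"
  shows "covec_act N (site_op N K k) (product_covec N g) j = product_covec N (g(k := row_mult K (g k))) j"
proof -
  define H where "H a \<alpha> = (if a = k then K $$ (\<alpha>, j k) else if \<alpha> = j a then 1 else 0)" for a \<alpha>
  define F where "F a \<alpha> = g a \<alpha> * H a \<alpha>" for a \<alpha>
  have "product_covec N g i * site_op N K k i j = (\<Prod>a<N. F a (i a))" for i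
  proof -
    have "(\<Prod>a<N. H a (i a)) = H k (i k) * (\<Prod>a\<in>{..<N} - {k}. H a (i a))"
      by (rule prod.remove) (use k in auto)
    also have "(\<Prod>a\<in>{..<N} - {k}. H a (i a)) = (\<Prod>a\<in>{..<N} - {k}. if i a = j a then 1 else 0)"
      by (rule prod.cong) (auto simp: H_def)
    finally have "(\<Prod>a<N. H a (i a)) = site_op N K k i j"
      by (simp add: site_op_def H_def)
    then show ?thesis
      by (simp add: product_covec_def F_def prod.distrib)
  qed
  then have "covec_act N (site_op N K k) (product_covec N g) j = (\<Prod>a<N. \<Sum>\<alpha><3. F a \<alpha>)"
    by (simp add: covec_act_def prod_sum_eq_sum_idx)
  also have "\<dots> = product_covec N (g(k := row_mult K (g k))) j"
    unfolding product_covec_def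
  proof (rule prod.cong)
    fix a assume "a \<in> {..<N}"
    then have "j a < 3"
      using idx_less_3[OF j] by simp
    moreover have "F a \<alpha> = (if \<alpha> = j a then g a \<alpha> else 0)" if "a \<noteq> k" for \<alpha>
      using that by (simp add: F_def H_def)
    ultimately show "(\<Sum>\<alpha><3. F a \<alpha>) = (g(k := row_mult K (g k))) a (j a)"
      by (cases "a = k") (simp_all add: F_def H_def row_mult_def sum.delta')
  qed simp
  finally show ?thesis .
qed

lemma covec_act_site_op_funpow:
  assumes k: "k < N" and "j \<in> idx N"
  shows "(covec_act N (site_op N K k) ^^ m) (product_covec N g) j
       = product_covec N (g(k := (row_mult K ^^ m) (g k))) j"
  using assms(2)
proof (induction m arbitrary: j)
  case (Suc m)
  have "(covec_act N (site_op N K k) ^^ Suc m) (product_covec N g) j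
      = covec_act N (site_op N K k) (product_covec N (g(k := (row_mult K ^^ m) (g k)))) j"
    by simp (rule covec_act_cong, simp add: Suc.IH fun_upd_def)
  also have "\<dots> = product_covec N (g(k := (row_mult K ^^ Suc m) (g k))) j"
    using covec_act_site_op[OF k Suc.prems] by simp
  finally show ?case .
qed simp

lemma covec_act_powers_site_op:
  assumes "M \<le> N" and "j \<in> idx N"
  shows "covec_act_powers N (site_op N K) (product_covec N g) h M j
       = product_covec N (\<lambda>a. if a < M then (row_mult K ^^ h a) (g a) else g a) j"
  using assms
proof (induction M arbitrary: j)
  case (Suc M)
  define g' where "g' = (\<lambda>a. if a < M then (row_mult K ^^ h a) (g a) else g a)"
  have "covec_act_powers N (site_op N K) (product_covec N g) h (Suc M) j
      = (covec_act N (site_op N K M) ^^ h M) (product_covec N g') j"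
    by simp (rule covec_act_funpow_cong, use Suc in \<open>simp_all add: g'_def\<close>)
  also have "\<dots> = product_covec N (g'(M := (row_mult K ^^ h M) (g' M))) j"
    using Suc.prems by (intro covec_act_site_op_funpow) auto
  also have "g'(M := (row_mult K ^^ h M) (g' M)) = (\<lambda>a. if a < Suc M then (row_mult K ^^ h a) (g a) else g a)"
    by (auto simp: g'_def)
  finally show ?case .
qed simp

definition cyclic_covec :: "complex mat \<Rightarrow> (nat \<Rightarrow> complex) \<Rightarrow> bool" where
  "cyclic_covec K s \<longleftrightarrow> (\<forall>w. \<exists>c. \<forall>\<gamma><3. w \<gamma> = (\<Sum>l<3. c l * (row_mult K ^^ l) s \<gamma>))"

lemma product_covec_spans:
  assumes "cyclic_covec K s"
  shows "covec_spans N (\<lambda>h. product_covec N (\<lambda>a. (row_mult K ^^ h a) s))"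
  unfolding covec_spans_def
proof
  fix w :: "(nat \<Rightarrow> nat) \<Rightarrow> complex"
  have "\<exists>c. \<forall>\<gamma><3. (if \<gamma> = \<beta> then 1 else 0) = (\<Sum>l<3. c l * (row_mult K ^^ l) s \<gamma>)" for \<beta>
    using assms[unfolded cyclic_covec_def, THEN spec, of "\<lambda>\<gamma>. if \<gamma> = \<beta> then 1 else 0"] by simp
  then obtain C where C: "\<And>\<beta> \<gamma>. \<gamma> < 3 \<Longrightarrow> (\<Sum>l<3. C \<beta> l * (row_mult K ^^ l) s \<gamma>) = (if \<gamma> = \<beta> then 1 else 0)"
    by metis
  define c where "c h = (\<Sum>j'\<in>idx N. w j' * (\<Prod>a<N. C (j' a) (h a)))" for h
  show "\<exists>c. \<forall>j\<in>idx N. w j = (\<Sum>h\<in>idx N. c h * product_covec N (\<lambda>a. (row_mult K ^^ h a) s) j)"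
  proof (intro exI[of _ c] ballI)
    fix j assume j: "j \<in> idx N"
    have "(\<Sum>h\<in>idx N. c h * product_covec N (\<lambda>a. (row_mult K ^^ h a) s) j)
        = (\<Sum>h\<in>idx N. \<Sum>j'\<in>idx N. w j' * (\<Prod>a<N. C (j' a) (h a) * (row_mult K ^^ h a) s (j a)))"
      unfolding c_def product_covec_def by (simp add: sum_distrib_right prod.distrib mult.assoc)
    also have "\<dots> = (\<Sum>j'\<in>idx N. w j' * (\<Sum>h\<in>idx N. \<Prod>a<N. C (j' a) (h a) * (row_mult K ^^ h a) s (j a)))"
      by (subst sum.swap) (simp add: sum_distrib_left)
    also have "\<dots> = (\<Sum>j'\<in>idx N. w j' * (\<Prod>a<N. \<Sum>l<3. C (j' a) l * (row_mult K ^^ l) s (j a)))"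
      by (simp add: prod_sum_eq_sum_idx)
    also have "\<dots> = (\<Sum>j'\<in>idx N. if j' = j then w j' else 0)"
    proof (rule sum.cong)
      fix j' assume j': "j' \<in> idx N"
      have "(\<Prod>a<N. \<Sum>l<3. C (j' a) l * (row_mult K ^^ l) s (j a)) = (\<Prod>a<N. if j a = j' a then 1 else 0)"
        using idx_less_3[OF j] C by (intro prod.cong) auto
      also have "\<dots> = (if j' = j then 1 else 0)"
      proof (cases "j' = j")
        case False
        then obtain a where a: "j' a \<noteq> j a"
          by auto
        then have "a < N"
          using idx_eq_0[OF j, of a] idx_eq_0[OF j', of a] by (metis not_less)
        then show ?thesis
          using False a by (auto intro!: prod_zero)
      qed simp
      finally show "w j' * (\<Prod>a<N. \<Sum>l<3. C (j' a) l * (row_mult K ^^ l) s (j a)) = (if j' = j then w j' else 0)"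
        by simp
    qed simp
    also have "\<dots> = w j"
      using j by (simp add: finite_idx)
    finally show "w j = (\<Sum>h\<in>idx N. c h * product_covec N (\<lambda>a. (row_mult K ^^ h a) s) j)"
      by simp
  qed
qed

section \<open>Cyclic covectors of 3 x 3 matrices\<close>

definition det3 :: "(nat \<Rightarrow> nat \<Rightarrow> complex) \<Rightarrow> complex" where
  "det3 a = a 0 0 * (a 1 1 * a 2 2 - a 1 2 * a 2 1) - a 0 1 * (a 1 0 * a 2 2 - a 1 2 * a 2 0)
          + a 0 2 * (a 1 0 * a 2 1 - a 1 1 * a 2 0)"

lemma sum_less_3: "(\<Sum>l<(3::nat). f l) = f 0 + f 1 + (f 2 :: complex)"
  by (simp add: eval_nat_numeral)

lemma cramer3:
  assumes "det3 (\<lambda>\<alpha> l. q l \<alpha>) \<noteq> 0"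
  shows "\<exists>c. \<forall>\<alpha><3. (\<Sum>l<3. c l * q l \<alpha>) = r \<alpha>"
proof (intro exI allI impI)
  let ?c = "\<lambda>l. det3 (\<lambda>\<alpha> l'. if l' = l then r \<alpha> else q l' \<alpha>) / det3 (\<lambda>\<alpha> l. q l \<alpha>)"
  fix \<alpha> :: nat assume "\<alpha> < 3"
  then have "\<alpha> = 0 \<or> \<alpha> = 1 \<or> \<alpha> = 2"
    by auto
  then have "(\<Sum>l<3. det3 (\<lambda>\<alpha> l'. if l' = l then r \<alpha> else q l' \<alpha>) * q l \<alpha>) = r \<alpha> * det3 (\<lambda>\<alpha> l. q l \<alpha>)"
    by (elim disjE) (simp_all add: sum_less_3 det3_def algebra_simps)
  then show "(\<Sum>l<3. ?c l * q l \<alpha>) = r \<alpha>"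
    using assms by (simp add: sum_divide_distrib[symmetric])
qed

lemma cyclic_covec_if_det3:
  "det3 (\<lambda>\<alpha> l. (row_mult K ^^ l) s \<alpha>) \<noteq> 0 \<Longrightarrow> cyclic_covec K s"
  unfolding cyclic_covec_def using cramer3 by metis

lemma row_mult_KJ:
  "row_mult (KJ k0 k1 k2 y1 y2) q 0 = q 0 * k0"
  "row_mult (KJ k0 k1 k2 y1 y2) q 1 = q 0 * y1 + q 1 * k1"
  "row_mult (KJ k0 k1 k2 y1 y2) q 2 = q 1 * y2 + q 2 * k2"
  by (simp_all add: row_mult_def KJ_def sum_less_3)

lemma funpow_0_1_2: "(f ^^ 0) v = v" "(f ^^ 1) v = f v" "(f ^^ 2) v = f (f v)"
  by (simp_all add: numeral_2_eq_2)

lemma KJ_cyclic_covec: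
  fixes x y z :: complex
  assumes "(k0 \<noteq> k1 \<and> k0 \<noteq> k2 \<and> k1 \<noteq> k2 \<and> y1 = 0 \<and> y2 = 0 \<and> x * y * z \<noteq> 0)
       \<or> (k0 = k1 \<and> k1 \<noteq> k2 \<and> y1 = 1 \<and> y2 = 0 \<and> x * z \<noteq> 0)
       \<or> (k0 = k1 \<and> k1 = k2 \<and> y1 = 1 \<and> y2 = 1 \<and> x \<noteq> 0)"
  shows "cyclic_covec (KJ k0 k1 k2 y1 y2) (\<lambda>\<alpha>. if \<alpha> = 0 then x else if \<alpha> = 1 then y else z)"
proof (rule cyclic_covec_if_det3)
  let ?u = "\<lambda>\<alpha>::nat. if \<alpha> = 0 then x else if \<alpha> = 1 then y else z"
  have krylov: "det3 (\<lambda>\<alpha> l. (row_mult (KJ k0 k1 k2 y1 y2) ^^ l) ?u \<alpha>) =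
    x * ((x * y1 + y * k1) * ((x * y1 + y * k1) * y2 + (y * y2 + z * k2) * k2)
      - (y * y2 + z * k2) * (x * k0 * y1 + (x * y1 + y * k1) * k1))
    - x * k0 * (y * ((x * y1 + y * k1) * y2 + (y * y2 + z * k2) * k2) - (x * k0 * y1 + (x * y1 + y * k1) * k1) * z)
    + x * k0 * k0 * (y * (y * y2 + z * k2) - (x * y1 + y * k1) * z)"
    unfolding det3_def by (simp only: funpow_0_1_2 row_mult_KJ) (simp add: algebra_simps)
  show "det3 (\<lambda>\<alpha> l. (row_mult (KJ k0 k1 k2 y1 y2) ^^ l) ?u \<alpha>) \<noteq> 0"
    using assms
  proof (elim disjE conjE)
    assume "k0 \<noteq> k1" "k0 \<noteq> k2" "k1 \<noteq> k2" "y1 = 0" "y2 = 0" "x * y * z \<noteq> 0"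
    moreover from this have "det3 (\<lambda>\<alpha> l. (row_mult (KJ k0 k1 k2 y1 y2) ^^ l) ?u \<alpha>)
        = x * y * z * (k1 - k0) * (k2 - k0) * (k2 - k1)"
      unfolding krylov by (simp add: algebra_simps)
    ultimately show ?thesis
      by simp
  next
    assume "k0 = k1" "k1 \<noteq> k2" "y1 = 1" "y2 = 0" "x * z \<noteq> 0"
    moreover from this have "det3 (\<lambda>\<alpha> l. (row_mult (KJ k0 k1 k2 y1 y2) ^^ l) ?u \<alpha>)
        = x * x * z * (k2 - k0) * (k2 - k0)"
      unfolding krylov by (simp add: algebra_simps)
    ultimately show ?thesis
      by simp
  next
    assume "k0 = k1" "k1 = k2" "y1 = 1" "y2 = 1" "x \<noteq> 0"
    moreover from this have "det3 (\<lambda>\<alpha> l. (row_mult (KJ k0 k1 k2 y1 y2) ^^ l) ?u \<alpha>) = x * x * x"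
      unfolding krylov by (simp add: algebra_simps)
    ultimately show ?thesis
      by simp
  qed
qed

lemma row_mult_mult:
  assumes "A \<in> carrier_mat 3 3" "B \<in> carrier_mat 3 3" "\<beta> < 3"
  shows "row_mult B (row_mult A q) \<beta> = row_mult (A * B) q \<beta>"
proof -
  have "row_mult B (row_mult A q) \<beta> = (\<Sum>\<alpha><3. \<Sum>i<3. q \<alpha> * A $$ (\<alpha>, i) * B $$ (i, \<beta>))"
    unfolding row_mult_def by (subst sum.swap) (simp add: sum_distrib_right)
  also have "\<dots> = row_mult (A * B) q \<beta>"
    using assms by (simp add: row_mult_def scalar_prod_def atLeast0LessThan sum_distrib_left mult.assoc)
  finally show ?thesis .
qed

lemma row_mult_one:
  assumes "\<beta> < 3"
  shows "row_mult (1\<^sub>m 3) w \<beta> = w \<beta>"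
proof -
  have "\<beta> = 0 \<or> \<beta> = 1 \<or> \<beta> = 2"
    using assms by auto
  then show ?thesis
    by (elim disjE) (simp_all add: row_mult_def sum_less_3)
qed

lemma row_mult_cong: "(\<And>\<alpha>. \<alpha> < 3 \<Longrightarrow> q \<alpha> = q' \<alpha>) \<Longrightarrow> row_mult M q = row_mult M q'"
  unfolding row_mult_def by (intro ext sum.cong) auto

lemma row_mult_sum:
  "row_mult M (\<lambda>\<alpha>. \<Sum>l<(3::nat). c l * v l \<alpha>) \<beta> = (\<Sum>l<3. c l * row_mult M (v l) \<beta>)"
proof -
  have "(\<Sum>\<alpha><3. (\<Sum>l<3. c l * v l \<alpha>) * M $$ (\<alpha>, \<beta>)) = (\<Sum>\<alpha><3. \<Sum>l<3. c l * (v l \<alpha> * M $$ (\<alpha>, \<beta>)))"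
    by (simp add: sum_distrib_right mult.assoc)
  also have "\<dots> = (\<Sum>l<3. \<Sum>\<alpha><3. c l * (v l \<alpha> * M $$ (\<alpha>, \<beta>)))"
    by (rule sum.swap)
  finally show ?thesis
    unfolding row_mult_def by (simp add: sum_distrib_left)
qed

lemma row_mult_funpow_conj:
  assumes K: "K = W * J * Wi" and carrier: "W \<in> carrier_mat 3 3" "Wi \<in> carrier_mat 3 3" "J \<in> carrier_mat 3 3"
    and inv: "Wi * W = 1\<^sub>m 3" and "\<beta> < 3"
  shows "(row_mult K ^^ l) (row_mult Wi u) \<beta> = row_mult Wi ((row_mult J ^^ l) u) \<beta>"
  using assms(6)
proof (induction l arbitrary: \<beta>)
  case (Suc l)
  have "Wi * K = (Wi * W) * J * Wi"
    using carrier unfolding K by (simp add: assoc_mult_mat[of _ 3 3 _ 3 _ 3])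
  then have "Wi * K = J * Wi"
    using carrier inv by simp
  have "(row_mult K ^^ Suc l) (row_mult Wi u) \<beta> = row_mult K (row_mult Wi ((row_mult J ^^ l) u)) \<beta>"
    using Suc.IH by (simp cong: row_mult_cong)
  also have "\<dots> = row_mult (Wi * K) ((row_mult J ^^ l) u) \<beta>"
    using carrier Suc.prems unfolding K by (intro row_mult_mult) auto
  also have "\<dots> = row_mult Wi ((row_mult J ^^ Suc l) u) \<beta>"
    using carrier Suc.prems unfolding \<open>Wi * K = J * Wi\<close> by (simp add: row_mult_mult)
  finally show ?case .
qed simp

lemma cyclic_covec_conj:
  assumes K: "K = W * J * Wi" and carrier: "W \<in> carrier_mat 3 3" "Wi \<in> carrier_mat 3 3" "J \<in> carrier_mat 3 3"
    and inv: "W * Wi = 1\<^sub>m 3" "Wi * W = 1\<^sub>m 3"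
    and cyclic: "cyclic_covec J u"
  shows "cyclic_covec K (row_mult Wi u)"
  unfolding cyclic_covec_def
proof
  fix w
  obtain c where c: "\<forall>\<gamma><3. row_mult W w \<gamma> = (\<Sum>l<3. c l * (row_mult J ^^ l) u \<gamma>)"
    using cyclic unfolding cyclic_covec_def by blast
  have "w \<gamma> = (\<Sum>l<3. c l * (row_mult K ^^ l) (row_mult Wi u) \<gamma>)" if "\<gamma> < 3" for \<gamma>
  proof -
    have "w \<gamma> = row_mult Wi (row_mult W w) \<gamma>"
      using that carrier inv by (simp add: row_mult_mult row_mult_one)
    also have "\<dots> = row_mult Wi (\<lambda>\<alpha>. \<Sum>l<3. c l * (row_mult J ^^ l) u \<alpha>) \<gamma>"
      using c by (simp cong: row_mult_cong)
    also have "\<dots> = (\<Sum>l<3. c l * (row_mult K ^^ l) (row_mult Wi u) \<gamma>)"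
      using that by (simp add: row_mult_sum row_mult_funpow_conj[OF K carrier inv(2)])
    finally show ?thesis .
  qed
  then show "\<exists>c. \<forall>\<gamma><3. w \<gamma> = (\<Sum>l<3. c l * (row_mult K ^^ l) (row_mult Wi u) \<gamma>)"
    by blast
qed

section \<open>The determinant of the separated-variables covectors\<close>

definition sov_det :: "nat \<Rightarrow> complex mat \<Rightarrow> complex \<Rightarrow> (nat \<Rightarrow> complex) \<Rightarrow> ((nat \<Rightarrow> nat) \<Rightarrow> complex) \<Rightarrow> complex" where
  "sov_det N K \<eta> \<xi> S = Determinant.det (covec_matrix N (sov_covec N K \<eta> \<xi> S))"

lemma polynomial_in_sov_det:
  assumes "\<And>n. n < N \<Longrightarrow> polynomial_in B (\<lambda>y. \<xi> y n)" "\<And>i. i \<in> idx N \<Longrightarrow> polynomial_in B (\<lambda>y. S y i)"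
  shows "polynomial_in B (\<lambda>y. sov_det N K \<eta> (\<xi> y) (S y))"
  unfolding sov_det_def sov_covec_eq_covec_act_powers
proof (rule polynomial_in_det_covec_matrix, rule polynomial_in_covec_act_powers)
  fix k i j assume "k < N"
  then show "polynomial_in B (\<lambda>y. transfer N K \<eta> (\<xi> y) (\<xi> y k) i j)"
    by (intro polynomial_in_transfer assms)
qed (use assms in auto)

lemma covec_spans_transfer_reduced_eta_zero:
  assumes "inj_on \<zeta> {..<N}" and "cyclic_covec K s"
  shows "covec_spans N (\<lambda>h. covec_act_powers N (\<lambda>k. transfer_reduced N K 0 \<zeta> k) (product_covec N (\<lambda>_. s)) h N)"
proof -
  define gap where "gap k = (\<Prod>n\<in>{..<N} - {k}. \<zeta> k - \<zeta> n)" for k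
  have "gap k \<noteq> 0" if "k < N" for k
    using assms(1) that by (auto simp: gap_def inj_on_def)
  then have "covec_spans N (\<lambda>h j. (\<Prod>m<N. gap m ^ h m) * product_covec N (\<lambda>a. (row_mult K ^^ h a) s) j)"
    by (intro covec_spans_scale product_covec_spans assms(2)) simp
  then show ?thesis
  proof (rule covec_spans_cong)
    fix h j assume j: "j \<in> idx N"
    have "covec_act_powers N (\<lambda>k. transfer_reduced N K 0 \<zeta> k) (product_covec N (\<lambda>_. s)) h N j
        = covec_act_powers N (\<lambda>k i j. gap k * site_op N K k i j) (product_covec N (\<lambda>_. s)) h N j"
      using j by (intro covec_act_powers_cong) (simp_all add: transfer_reduced_eta_zero gap_def)
    also have "\<dots> = (\<Prod>m<N. gap m ^ h m) * product_covec N (\<lambda>a. (row_mult K ^^ h a) s) j"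
      using j by (simp add: covec_act_powers_scale covec_act_powers_site_op product_covec_def)
    finally show "(\<Prod>m<N. gap m ^ h m) * product_covec N (\<lambda>a. (row_mult K ^^ h a) s) j
        = covec_act_powers N (\<lambda>k. transfer_reduced N K 0 \<zeta> k) (product_covec N (\<lambda>_. s)) h N j"
      by simp
  qed
qed

lemma covec_spans_sov_covec_scaled:
  assumes "t \<noteq> 0" "\<eta> \<noteq> 0"
    and "covec_spans N (\<lambda>h. covec_act_powers N (\<lambda>k. transfer_reduced N K (\<eta> / t) \<zeta> k) S h N)"
  shows "covec_spans N (sov_covec N K \<eta> (\<lambda>n. t * \<zeta> n) S)"
proof -
  let ?c = "t ^ N * (\<eta> / t)"
  have "covec_spans N (\<lambda>h j. (\<Prod>m<N. ?c ^ h m) * covec_act_powers N (\<lambda>k. transfer_reduced N K (\<eta> / t) \<zeta> k) S h N j)"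
    using assms by (intro covec_spans_scale) simp_all
  then show ?thesis
  proof (rule covec_spans_cong)
    fix h j assume j: "j \<in> idx N"
    have "sov_covec N K \<eta> (\<lambda>n. t * \<zeta> n) S h j
        = covec_act_powers N (\<lambda>k i j. ?c * transfer_reduced N K (\<eta> / t) \<zeta> k i j) S h N j"
      unfolding sov_covec_eq_covec_act_powers using j
      by (intro covec_act_powers_cong) (simp_all add: transfer_scale[OF assms(1)] transfer_at_inhomogeneity)
    also have "\<dots> = (\<Prod>m<N. ?c ^ h m) * covec_act_powers N (\<lambda>k. transfer_reduced N K (\<eta> / t) \<zeta> k) S h N j"
      by (simp only: covec_act_powers_scale)
    finally show "(\<Prod>m<N. ?c ^ h m) * covec_act_powers N (\<lambda>k. transfer_reduced N K (\<eta> / t) \<zeta> k) S h N j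
        = sov_covec N K \<eta> (\<lambda>n. t * \<zeta> n) S h j"
      by simp
  qed
qed

lemma exists_sov_det_nonzero:
  assumes "\<eta> \<noteq> 0" and "cyclic_covec K s"
  obtains \<xi> where "sov_det N K \<eta> \<xi> (product_covec N (\<lambda>_. s)) \<noteq> 0"
proof -
  define S where "S = product_covec N (\<lambda>_. s)"
  define \<zeta> :: "nat \<Rightarrow> complex" where "\<zeta> n = of_nat n" for n
  define F where "F e = Determinant.det (covec_matrix N
      (\<lambda>h. covec_act_powers N (\<lambda>k. transfer_reduced N K e \<zeta> k) S h N))" for e
  have "polynomial_in {\<lambda>e. e} F"
    unfolding F_def
    by (intro polynomial_in_det_covec_matrix polynomial_in_covec_act_powers polynomial_in_transfer_reduced
        polynomial_in.const) (auto intro: polynomial_in.base)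
  then have "continuous_on UNIV F"
    by (rule polynomial_in_continuous_on) (auto intro: continuous_intros)
  then have "isCont F 0"
    by (simp add: continuous_on_eq_continuous_at)
  moreover have "F 0 \<noteq> 0"
    unfolding F_def S_def covec_spans_iff_det_nonzero[symmetric]
    by (rule covec_spans_transfer_reduced_eta_zero[OF _ assms(2)]) (simp add: \<zeta>_def inj_on_def)
  ultimately obtain \<epsilon> where "\<epsilon> \<noteq> 0" "F \<epsilon> \<noteq> 0"
    by (rule isCont_other_point_ne)
  then have "covec_spans N (\<lambda>h. covec_act_powers N (\<lambda>k. transfer_reduced N K (\<eta> / (\<eta> / \<epsilon>)) \<zeta> k) S h N)"
    using assms(1) by (simp add: F_def covec_spans_iff_det_nonzero)
  then have "covec_spans N (sov_covec N K \<eta> (\<lambda>n. \<eta> / \<epsilon> * \<zeta> n) S)"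
    using assms(1) \<open>\<epsilon> \<noteq> 0\<close> by (intro covec_spans_sov_covec_scaled) simp_all
  then show ?thesis
    using that by (simp add: S_def sov_det_def covec_spans_iff_det_nonzero)
qed

lemma AE_sov_det_nonzero:
  assumes "sov_det N K \<eta> \<xi>0 S \<noteq> 0"
  shows "AE \<xi> in PiM {..<N} (\<lambda>_. lborel). sov_det N K \<eta> \<xi> S \<noteq> 0"
  using assms
  by (intro AE_PiM_polynomial_nonzero polynomial_in_sov_det[where \<xi>="\<lambda>\<xi>. \<xi>" and S="\<lambda>_. S"])
    (auto intro: polynomial_in_coordinate polynomial_in.const)

lemma AE_pair_sov_det_nonzero:
  assumes "sov_det N K \<eta> \<xi>0 S0 \<noteq> 0"
  shows "AE (S, \<xi>) in PiM (idx N) (\<lambda>_. lborel) \<Otimes>\<^sub>M PiM {..<N} (\<lambda>_. lborel). sov_det N K \<eta> \<xi> S \<noteq> 0"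
proof -
  let ?PS = "PiM (idx N) (\<lambda>_. lborel :: complex measure)" and ?PX = "PiM {..<N} (\<lambda>_. lborel :: complex measure)"
  interpret product_sigma_finite "\<lambda>_. lborel :: complex measure"
    by (simp add: product_sigma_finite_def lborel.sigma_finite_measure_axioms)
  interpret S: finite_product_sigma_finite "\<lambda>_. lborel :: complex measure" "idx N"
    by standard (simp add: finite_idx)
  interpret X: finite_product_sigma_finite "\<lambda>_. lborel :: complex measure" "{..<N}"
    by standard simp
  interpret pair_sigma_finite ?PS ?PX
    by standard
  have "(\<lambda>p. sov_det N K \<eta> (snd p) (fst p)) \<in> borel_measurable (?PS \<Otimes>\<^sub>M ?PX)"
  proof (rule polynomial_in_measurable)
    show "polynomial_in ({\<lambda>p. snd p n | n. n < N} \<union> {\<lambda>p. fst p i | i. i \<in> idx N})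
        (\<lambda>p. sov_det N K \<eta> (snd p) (fst p))"
      by (rule polynomial_in_sov_det) (auto intro: polynomial_in.base)
  qed auto
  then have [measurable]: "Measurable.pred (?PS \<Otimes>\<^sub>M ?PX) (\<lambda>p. sov_det N K \<eta> (snd p) (fst p) \<noteq> 0)"
    by measurable
  have "AE S in ?PS. sov_det N K \<eta> \<xi>0 S \<noteq> 0"
    using assms finite_idx
    by (intro AE_PiM_polynomial_nonzero polynomial_in_sov_det[where \<xi>="\<lambda>_. \<xi>0" and S="\<lambda>S. S"])
      (auto intro: polynomial_in_coordinate polynomial_in.const)
  then have "AE S in ?PS. AE \<xi> in ?PX. sov_det N K \<eta> \<xi> S \<noteq> 0"
    by eventually_elim (rule AE_sov_det_nonzero)
  then show ?thesis
    unfolding case_prod_beta by (intro AE_pair_measure) simp_all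
qed

lemma tensor_state_sov_det_nonzero:
  assumes "\<eta> \<noteq> 0" and "W \<in> carrier_mat 3 3" "Wi \<in> carrier_mat 3 3" "W * Wi = 1\<^sub>m 3" "Wi * W = 1\<^sub>m 3"
    and "K = W * KJ k0 k1 k2 y1 y2 * Wi"
    and "(k0 \<noteq> k1 \<and> k0 \<noteq> k2 \<and> k1 \<noteq> k2 \<and> y1 = 0 \<and> y2 = 0 \<and> x * y * z \<noteq> 0)
       \<or> (k0 = k1 \<and> k1 \<noteq> k2 \<and> y1 = 1 \<and> y2 = 0 \<and> x * z \<noteq> 0)
       \<or> (k0 = k1 \<and> k1 = k2 \<and> y1 = 1 \<and> y2 = 1 \<and> x \<noteq> 0)"
  obtains \<xi> where "sov_det N K \<eta> \<xi> (tensor_state N Wi x y z) \<noteq> 0"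
proof -
  have "cyclic_covec K (row_mult Wi (\<lambda>\<alpha>. if \<alpha> = 0 then x else if \<alpha> = 1 then y else z))"
    using assms(2-5) KJ_cyclic_covec[OF assms(7)] by (intro cyclic_covec_conj[OF assms(6)]) (simp_all add: KJ_def)
  then obtain \<xi> where "sov_det N K \<eta> \<xi> (product_covec N (\<lambda>_. row_mult Wi
      (\<lambda>\<alpha>. if \<alpha> = 0 then x else if \<alpha> = 1 then y else z))) \<noteq> 0"
    by (rule exists_sov_det_nonzero[OF assms(1)])
  then show ?thesis
    by (intro that) (simp add: tensor_state_eq_product_covec)
qed

theorem proposition5p3:
  fixes N :: nat and \<eta> :: complex and K W Wi :: "complex mat"
    and k0 k1 k2 y1 y2 :: complex
  assumes "N \<ge> 1"
    and "\<eta> \<noteq> 0"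
    and "K \<in> carrier_mat 3 3" and "W \<in> carrier_mat 3 3" and "Wi \<in> carrier_mat 3 3"
    and "W * Wi = 1\<^sub>m 3" and "Wi * W = 1\<^sub>m 3"
    and "w_simple K"
    and "K = W * KJ k0 k1 k2 y1 y2 * Wi"
    and cases: "(k0 \<noteq> k1 \<and> k0 \<noteq> k2 \<and> k1 \<noteq> k2 \<and> y1 = 0 \<and> y2 = 0)
             \<or> (k0 = k1 \<and> k1 \<noteq> k2 \<and> y1 = 1 \<and> y2 = 0)
             \<or> (k0 = k1 \<and> k1 = k2 \<and> y1 = 1 \<and> y2 = 1)"
  shows "(AE (S, \<xi>) in (PiM (idx N) (\<lambda>_. lborel)) \<Otimes>\<^sub>M (PiM {..<N} (\<lambda>_. lborel)).
            admissible N \<eta> \<xi> \<longrightarrow> covec_basis N (sov_covec N K \<eta> \<xi> S))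
       \<and> (\<forall>x y z.
            ((k0 \<noteq> k1 \<and> k0 \<noteq> k2 \<and> k1 \<noteq> k2 \<and> y1 = 0 \<and> y2 = 0 \<and> x * y * z \<noteq> 0)
             \<or> (k0 = k1 \<and> k1 \<noteq> k2 \<and> y1 = 1 \<and> y2 = 0 \<and> x * z \<noteq> 0)
             \<or> (k0 = k1 \<and> k1 = k2 \<and> y1 = 1 \<and> y2 = 1 \<and> x \<noteq> 0)) \<longrightarrow>
            (AE \<xi> in PiM {..<N} (\<lambda>_. lborel).
               admissible N \<eta> \<xi> \<longrightarrow> covec_basis N (sov_covec N K \<eta> \<xi> (tensor_state N Wi x y z))))"
proof -
  have basis: "covec_basis N (sov_covec N K \<eta> \<xi> S)" if "sov_det N K \<eta> \<xi> S \<noteq> 0" for \<xi> S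
    using that unfolding sov_det_def by (rule det_nonzero_imp_covec_basis)
  obtain \<xi>0 where "sov_det N K \<eta> \<xi>0 (tensor_state N Wi 1 1 1) \<noteq> 0"
    using tensor_state_sov_det_nonzero[OF assms(2,4-7,9), where x=1 and y=1 and z=1] cases by auto
  then have "AE (S, \<xi>) in PiM (idx N) (\<lambda>_. lborel) \<Otimes>\<^sub>M PiM {..<N} (\<lambda>_. lborel).
      admissible N \<eta> \<xi> \<longrightarrow> covec_basis N (sov_covec N K \<eta> \<xi> S)"
    by (rule AE_mp[OF AE_pair_sov_det_nonzero]) (auto intro!: AE_I2 basis)
  moreover have "AE \<xi> in PiM {..<N} (\<lambda>_. lborel).
      admissible N \<eta> \<xi> \<longrightarrow> covec_basis N (sov_covec N K \<eta> \<xi> (tensor_state N Wi x y z))"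
    if xyz: "(k0 \<noteq> k1 \<and> k0 \<noteq> k2 \<and> k1 \<noteq> k2 \<and> y1 = 0 \<and> y2 = 0 \<and> x * y * z \<noteq> 0)
      \<or> (k0 = k1 \<and> k1 \<noteq> k2 \<and> y1 = 1 \<and> y2 = 0 \<and> x * z \<noteq> 0)
      \<or> (k0 = k1 \<and> k1 = k2 \<and> y1 = 1 \<and> y2 = 1 \<and> x \<noteq> 0)" for x y z
  proof -
    obtain \<xi>0 where "sov_det N K \<eta> \<xi>0 (tensor_state N Wi x y z) \<noteq> 0"
      using xyz by (rule tensor_state_sov_det_nonzero[OF assms(2,4-7,9)])
    then show ?thesis
      by (rule AE_mp[OF AE_sov_det_nonzero]) (auto intro!: AE_I2 basis)
  qed
  ultimately show ?thesis
    by blast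
qed

end
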